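(* Let $M,N,K$ be symmetric homogeneous bi-variate means having symmetric asymptotic expansions with coefficients $(a^M_n)$, $(a^N_n)$, $(a^K_n)$ respectively. Then the resultant mean-map $R=\mathcal R(K,N,M)$, $R(s,t)=K\big(N(s,M(s,t)),N(M(s,t),t)\big)$, has a symmetric asymptotic expansion $R(x-t,x+t)\sim\sum_{m\ge0}a^R_mt^{2m}x^{-2m+1}$ ($x\to\infty$) with $$a^R_m=\sum_{n=0}^m a^K_n\sum_{k=0}^{m-n}P[k,2n,\mathbf d]\,P[m-n-k,-2n+1,\mathbf s],\qquad m\in\mathbb N_0,$$ where $\mathbf d=(d_m)_{m\ge0}$ and $\mathbf s=(s_m)_{m\ge0}$ are $$d_m=-\frac12\sum_{n=0}^m a^N_n\sum_{k=0}^{2m+1-2n}P[k,2n,\mathbf g^M]\,P[2m+1-2n-k,-2n+1,\mathbf h^M],$$ $$s_m=\frac12\sum_{n=0}^m a^N_n\sum_{k=0}^{2m-2n}P[k,2n,\mathbf g^M]\,P[2m-2n-k,-2n+1,\mathbf h^M].$$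
   Context: A bi-variate mean is a function $M:(0,\infty)^2\to(0,\infty)$ with $\min(s,t)\le M(s,t)\le\max(s,t)$; it is symmetric if $M(s,t)=M(t,s)$ and homogeneous if $M(\lambda s,\lambda t)=\lambda M(s,t)$ for $\lambda,s,t>0$. A mean $M$ has a symmetric asymptotic expansion with coefficients $(a^M_n)_{n\ge0}$ if for every fixed real $t$ and every $N\ge0$, $M(x-t,x+t)=\sum_{n=0}^N a^M_nt^{2n}x^{-2n+1}+o(x^{-2N+1})$ as $x\to\infty$. For a sequence $\mathbf b=(b_0,b_1,\ldots)$ with $b_0\ne0$ and $r\in\mathbb R$, $P[0,r,\mathbf b]=b_0^r$ and $P[n,r,\mathbf b]=\frac1{nb_0}\sum_{k=1}^n(k(1+r)-n)b_kP[n-k,r,\mathbf b]$ for $n\ge1$ (the coefficient of $z^n$ in $(\sum_j b_jz^j)^r$). Given coefficients $(a^M_n)$, set $\mathbf g^M=(1,a^M_1,0,a^M_2,0,a^M_3,\ldots)$ (i.e. $g_0=1$, $g_{2k-1}=a^M_k$, $g_{2k}=0$ for $k\ge1$) and $\mathbf h^M=(2,-1,a^M_1,0,a^M_2,0,a^M_3,\ldots)$ (i.e. $h_0=2$, $h_1=-1$, $h_{2k}=a^M_k$, $h_{2k+1}=0$ for $k\ge1$). (One has $d_0=1/2$, $s_0=1$.) *)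

theory Defs
  imports "HOL-Analysis.Analysis" "HOL-Library.Landau_Symbols"
begin

definition is_mean :: "(real \<Rightarrow> real \<Rightarrow> real) \<Rightarrow> bool" where
  "is_mean M \<longleftrightarrow> (\<forall>s>0. \<forall>t>0. min s t \<le> M s t \<and> M s t \<le> max s t)"

definition symmetric_mean :: "(real \<Rightarrow> real \<Rightarrow> real) \<Rightarrow> bool" where
  "symmetric_mean M \<longleftrightarrow> (\<forall>s>0. \<forall>t>0. M s t = M t s)"

definition homogeneous_mean :: "(real \<Rightarrow> real \<Rightarrow> real) \<Rightarrow> bool" where
  "homogeneous_mean M \<longleftrightarrow> (\<forall>l>0. \<forall>s>0. \<forall>t>0. M (l * s) (l * t) = l * M s t)"

definition has_sym_asymp_exp :: "(real \<Rightarrow> real \<Rightarrow> real) \<Rightarrow> (nat \<Rightarrow> real) \<Rightarrow> bool" where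
  "has_sym_asymp_exp M a \<longleftrightarrow>
     (\<forall>t::real. \<forall>N::nat.
        (\<lambda>x. M (x - t) (x + t) - (\<Sum>n\<le>N. a n * t ^ (2 * n) * x powr (1 - 2 * real n)))
          \<in> o[at_top](\<lambda>x. x powr (1 - 2 * real N)))"

text \<open>P[n,r,b]: coefficient of z^n in (sum_j b_j z^j)^r, defined by the recursion.\<close>
function P :: "nat \<Rightarrow> real \<Rightarrow> (nat \<Rightarrow> real) \<Rightarrow> real" where
  "P n r b = (if n = 0 then b 0 powr r
     else (1 / (real n * b 0)) *
          (\<Sum>k\<in>{1..n}. (real k * (1 + r) - real n) * b k * P (n - k) r b))"
  by auto
termination
  by (relation "Wellfounded.measure (\<lambda>(n, r, b). n)") auto

declare P.simps [simp del]

definition gseq :: "(nat \<Rightarrow> real) \<Rightarrow> nat \<Rightarrow> real" where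
  "gseq a j = (if j = 0 then 1 else if odd j then a ((j + 1) div 2) else 0)"

definition hseq :: "(nat \<Rightarrow> real) \<Rightarrow> nat \<Rightarrow> real" where
  "hseq a j = (if j = 0 then 2 else if j = 1 then -1 else if even j then a (j div 2) else 0)"

definition dseq :: "(nat \<Rightarrow> real) \<Rightarrow> (nat \<Rightarrow> real) \<Rightarrow> nat \<Rightarrow> real" where
  "dseq aM aN m = - (1/2) * (\<Sum>n\<le>m. aN n *
      (\<Sum>k\<le>2*m+1-2*n. P k (2 * real n) (gseq aM) *
                      P (2*m+1-2*n-k) (1 - 2 * real n) (hseq aM)))"

definition sseq :: "(nat \<Rightarrow> real) \<Rightarrow> (nat \<Rightarrow> real) \<Rightarrow> nat \<Rightarrow> real" where
  "sseq aM aN m = (1/2) * (\<Sum>n\<le>m. aN n *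
      (\<Sum>k\<le>2*m-2*n. P k (2 * real n) (gseq aM) *
                      P (2*m-2*n-k) (1 - 2 * real n) (hseq aM)))"

definition resultant :: "(real \<Rightarrow> real \<Rightarrow> real) \<Rightarrow> (real \<Rightarrow> real \<Rightarrow> real)
    \<Rightarrow> (real \<Rightarrow> real \<Rightarrow> real) \<Rightarrow> real \<Rightarrow> real \<Rightarrow> real" where
  "resultant K N M s t = K (N s (M s t)) (N (M s t) t)"

definition resultant_coeff :: "(nat \<Rightarrow> real) \<Rightarrow> (nat \<Rightarrow> real) \<Rightarrow> (nat \<Rightarrow> real) \<Rightarrow> nat \<Rightarrow> real" where
  "resultant_coeff aK aN aM m = (\<Sum>n\<le>m. aK n *
      (\<Sum>k\<le>m-n. P k (2 * real n) (dseq aM aN) *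
                P (m-n-k) (1 - 2 * real n) (sseq aM aN)))"

end

theory Submission
  imports Defs "HOL-Computational_Algebra.Formal_Power_Series"
begin

unbundle no vec_syntax
unbundle fps_syntax

text \<open>By homogeneity \<open>M(x - t, x + t) = x \<phi>\<^sub>M(t/x)\<close> with \<open>\<phi>\<^sub>M(u) = M(1 - u, 1 + u)\<close>, so a
  symmetric asymptotic expansion of \<open>M\<close> amounts to an expansion
  \<open>\<phi>\<^sub>M(u) = \<Sum>n\<le>N. a\<^sub>n u\<^sup>2\<^sup>n + o(u\<^sup>2\<^sup>N)\<close> of the even function \<open>\<phi>\<^sub>M\<close> at \<open>0\<close>. Such expansions,
  recorded by formal power series, are preserved by sums, products, inverses and substitution.
  Homogeneity also gives \<open>N(x, y) = c \<phi>\<^sub>N(\<delta>/c)\<close> with \<open>c = (x + y)/2\<close> and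
  \<open>\<delta> = (y - x)/2\<close>. Applied to \<open>p(u) = N(1 - u, \<phi>\<^sub>M(u))\<close> this expands \<open>p\<close> with even
  coefficients \<open>s\<close> and odd coefficients \<open>-d\<close>; applied to
  \<open>R(1 - u, 1 + u) = K(p(u), p(-u))\<close>, where now \<open>c\<close> and \<open>\<delta>\<close> are the even and odd parts of
  \<open>p\<close>, it expands \<open>\<phi>\<^sub>R\<close>. The coefficients of the resulting power series are read off
  with \<open>P[n, r, b] = [z\<^sup>n] B(z)\<^sup>r\<close>.\<close>

definition fps_expansion_upto :: "nat \<Rightarrow> real fps \<Rightarrow> (real \<Rightarrow> real) \<Rightarrow> bool" where
  "fps_expansion_upto N F f \<longleftrightarrow> ((\<lambda>u. (f u - (\<Sum>k\<le>N. F$k * u^k)) / u^N) \<longlongrightarrow> 0) (at 0)"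

lemma fps_expansion_upto_cong:
  assumes "fps_expansion_upto N F f" "eventually (\<lambda>u. f u = g u) (at 0)"
    and "\<And>k. k \<le> N \<Longrightarrow> F$k = G$k"
  shows "fps_expansion_upto N G g"
proof -
  have "eventually (\<lambda>u. (f u - (\<Sum>k\<le>N. F$k * u^k)) / u^N = (g u - (\<Sum>k\<le>N. G$k * u^k)) / u^N) (at 0)"
    using assms(2) by eventually_elim (simp add: assms(3))
  then show ?thesis
    using assms(1) unfolding fps_expansion_upto_def by (rule tendsto_cong[THEN iffD1])
qed

lemma fps_expansion_upto_0: "fps_expansion_upto 0 F f \<longleftrightarrow> (f \<longlongrightarrow> F$0) (at 0)"
  unfolding fps_expansion_upto_def by (simp add: LIM_zero_iff)

lemma fps_expansion_upto_Suc:
  "fps_expansion_upto (Suc N) F f \<longleftrightarrow> fps_expansion_upto N (fps_shift 1 F) (\<lambda>u. (f u - F$0) / u)"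
proof -
  have "(f u - (\<Sum>k\<le>Suc N. F$k * u^k)) / u^(Suc N) =
      ((f u - F$0) / u - (\<Sum>k\<le>N. fps_shift 1 F$k * u^k)) / u^N" if "u \<noteq> 0" for u :: real
  proof -
    have "(\<Sum>k\<le>Suc N. F$k * u^k) = F$0 + u * (\<Sum>k\<le>N. F$(k+1) * u^k)"
      by (subst sum.atMost_Suc_shift) (simp add: sum_distrib_left algebra_simps)
    then show ?thesis using that by (simp add: field_simps)
  qed
  then have "eventually (\<lambda>u. (f u - (\<Sum>k\<le>Suc N. F$k * u^k)) / u^(Suc N) =
      ((f u - F$0) / u - (\<Sum>k\<le>N. fps_shift 1 F$k * u^k)) / u^N) (at 0)"
    unfolding eventually_at_filter by (intro always_eventually) blast
  then show ?thesis unfolding fps_expansion_upto_def by (rule tendsto_cong)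
qed

lemma fps_expansion_upto_tendsto: "fps_expansion_upto N F f \<Longrightarrow> (f \<longlongrightarrow> F$0) (at 0)"
proof (induction N arbitrary: F f)
  case 0
  then show ?case by (simp add: fps_expansion_upto_0)
next
  case (Suc N)
  from Suc.IH[OF Suc.prems[unfolded fps_expansion_upto_Suc]]
  have "((\<lambda>u. (f u - F$0) / u) \<longlongrightarrow> F$1) (at 0)" by simp
  then have "((\<lambda>u. F$0 + u * ((f u - F$0) / u)) \<longlongrightarrow> F$0 + 0 * F$1) (at 0)"
    by (intro tendsto_intros) auto
  moreover have "eventually (\<lambda>u. F$0 + u * ((f u - F$0) / u) = f u) (at 0)"
    unfolding eventually_at_filter by (intro always_eventually) auto
  ultimately show ?case by (simp add: tendsto_cong)
qed

lemma fps_expansion_upto_Suc_imp: "fps_expansion_upto (Suc N) F f \<Longrightarrow> fps_expansion_upto N F f"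
proof (induction N arbitrary: F f)
  case 0
  then show ?case by (simp add: fps_expansion_upto_0 fps_expansion_upto_tendsto)
next
  case (Suc N)
  then show ?case by (simp add: fps_expansion_upto_Suc)
qed

lemma fps_expansion_upto_mono: "fps_expansion_upto N F f \<Longrightarrow> M \<le> N \<Longrightarrow> fps_expansion_upto M F f"
  by (induction N) (auto simp: le_Suc_eq dest: fps_expansion_upto_Suc_imp)

lemma fps_expansion_upto_add:
  "fps_expansion_upto N F f \<Longrightarrow> fps_expansion_upto N G g \<Longrightarrow>
   fps_expansion_upto N (F + G) (\<lambda>u. f u + g u)"
  unfolding fps_expansion_upto_def
  by (drule (1) tendsto_add) (simp add: sum.distrib algebra_simps add_divide_distrib diff_divide_distrib)

lemma fps_expansion_upto_const: "fps_expansion_upto N (fps_const c) (\<lambda>_. c)"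
proof -
  have "(\<Sum>k\<le>N. fps_const c $ k * u^k) = c" for u :: real
    by (subst sum.atMost_shift) (auto simp: fps_nth_fps_const)
  then show ?thesis unfolding fps_expansion_upto_def by simp
qed

lemma fps_expansion_upto_X: "fps_expansion_upto N fps_X (\<lambda>u. u)"
proof (cases N)
  case 0
  then show ?thesis by (simp add: fps_expansion_upto_0)
next
  case (Suc M)
  have "fps_expansion_upto M 1 (\<lambda>u. (u - fps_X $ 0) / u)"
    using fps_expansion_upto_const[of M 1]
    by (rule fps_expansion_upto_cong) (auto simp: eventually_at_filter fps_const_1_eq_1)
  moreover have "fps_shift 1 fps_X = (1 :: real fps)"
    by (rule fps_ext) simp
  ultimately show ?thesis using Suc by (simp add: fps_expansion_upto_Suc)
qed

lemma fps_shift_1_mult: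
  "fps_shift 1 (F * G) = F * fps_shift 1 G + fps_const (G$0) * fps_shift 1 (F :: real fps)"
proof (rule fps_ext)
  fix n
  have "(F * G) $ (n+1) = (\<Sum>i=0..n. F$i * G$(n + 1 - i)) + F$(n+1) * G$0"
    by (simp add: fps_mult_nth)
  also have "(\<Sum>i=0..n. F$i * G$(n + 1 - i)) = (\<Sum>i=0..n. F$i * G$(n - i + 1))"
    by (intro sum.cong) (auto simp: Suc_diff_le)
  finally show "fps_shift 1 (F * G) $ n = (F * fps_shift 1 G + fps_const (G$0) * fps_shift 1 F) $ n"
    by (simp add: fps_mult_nth[of F])
qed

text \<open>Both product and inverse go by induction on the order, since removing the constant term
  and dividing by \<open>u\<close> turns an expansion of order \<open>N+1\<close> into one of order \<open>N\<close>.\<close>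

lemma fps_expansion_upto_mult:
  "fps_expansion_upto N F f \<Longrightarrow> fps_expansion_upto N G g \<Longrightarrow>
   fps_expansion_upto N (F * G) (\<lambda>u. f u * g u)"
proof (induction N arbitrary: F G f g)
  case 0
  then show ?case by (simp add: fps_expansion_upto_0 tendsto_mult)
next
  case (Suc N)
  have f: "fps_expansion_upto N F f"
    using Suc.prems(1) by (rule fps_expansion_upto_Suc_imp)
  have f': "fps_expansion_upto N (fps_shift 1 F) (\<lambda>u. (f u - F$0) / u)"
    and g': "fps_expansion_upto N (fps_shift 1 G) (\<lambda>u. (g u - G$0) / u)"
    using Suc.prems by (simp_all add: fps_expansion_upto_Suc)
  have "fps_expansion_upto N (F * fps_shift 1 G + fps_const (G$0) * fps_shift 1 F)
      (\<lambda>u. f u * ((g u - G$0) / u) + G$0 * ((f u - F$0) / u))"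
    by (intro fps_expansion_upto_add Suc.IH f f' g' fps_expansion_upto_const)
  then have "fps_expansion_upto N (fps_shift 1 (F * G)) (\<lambda>u. (f u * g u - (F*G)$0) / u)"
    by (rule fps_expansion_upto_cong)
      (simp_all only: fps_shift_1_mult, auto simp: eventually_at_filter field_simps)
  then show ?case by (simp add: fps_expansion_upto_Suc)
qed

lemma fps_expansion_upto_cmult:
  "fps_expansion_upto N F f \<Longrightarrow> fps_expansion_upto N (fps_const c * F) (\<lambda>u. c * f u)"
  using fps_expansion_upto_mult[OF fps_expansion_upto_const] .

lemma fps_expansion_upto_uminus:
  "fps_expansion_upto N F f \<Longrightarrow> fps_expansion_upto N (- F) (\<lambda>u. - f u)"
  using fps_expansion_upto_cmult[of N F f "-1"] by (simp flip: fps_const_neg)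

lemma fps_expansion_upto_diff:
  "fps_expansion_upto N F f \<Longrightarrow> fps_expansion_upto N G g \<Longrightarrow>
   fps_expansion_upto N (F - G) (\<lambda>u. f u - g u)"
  using fps_expansion_upto_add[OF _ fps_expansion_upto_uminus, of N F f G g] by simp

lemma fps_expansion_upto_power:
  "fps_expansion_upto N F f \<Longrightarrow> fps_expansion_upto N (F ^ n) (\<lambda>u. f u ^ n)"
  by (induction n)
    (simp_all add: fps_expansion_upto_mult fps_expansion_upto_const[of N 1, simplified])

lemma fps_expansion_upto_sum:
  "finite A \<Longrightarrow> (\<And>i. i \<in> A \<Longrightarrow> fps_expansion_upto N (F i) (f i)) \<Longrightarrow>
   fps_expansion_upto N (\<Sum>i\<in>A. F i) (\<lambda>u. \<Sum>i\<in>A. f i u)"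
proof (induction A rule: finite_induct)
  case empty
  then show ?case using fps_expansion_upto_const[of N 0] by simp
next
  case (insert x A)
  then show ?case by (simp add: fps_expansion_upto_add)
qed

lemma fps_shift_1_inverse:
  assumes "F$0 \<noteq> (0::real)"
  shows "fps_shift 1 (inverse F) = - fps_shift 1 F * inverse F * fps_const (inverse (F$0))"
proof -
  have "fps_shift 1 (1::real fps) = 0" by (rule fps_ext) simp
  then have "fps_shift 1 (F * inverse F) = 0"
    by (simp only: inverse_mult_eq_1'[OF assms])
  then have "F * fps_shift 1 (inverse F) = - (fps_const (inverse (F$0)) * fps_shift 1 F)"
    by (simp only: fps_shift_1_mult fps_inverse_nth_0 eq_neg_iff_add_eq_0)
  then have "inverse F * (F * fps_shift 1 (inverse F)) =
      - fps_shift 1 F * inverse F * fps_const (inverse (F$0))"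
    by (simp add: algebra_simps)
  then show ?thesis
    using assms by (simp add: inverse_mult_eq_1 flip: mult.assoc)
qed

lemma fps_expansion_upto_inverse:
  "fps_expansion_upto N F f \<Longrightarrow> F$0 \<noteq> 0 \<Longrightarrow>
   fps_expansion_upto N (inverse F) (\<lambda>u. inverse (f u))"
proof (induction N arbitrary: F f)
  case 0
  then show ?case by (simp add: fps_expansion_upto_0 tendsto_inverse)
next
  case (Suc N)
  have f: "fps_expansion_upto N F f"
    using Suc.prems(1) by (rule fps_expansion_upto_Suc_imp)
  have f': "fps_expansion_upto N (fps_shift 1 F) (\<lambda>u. (f u - F$0) / u)"
    using Suc.prems(1) by (simp add: fps_expansion_upto_Suc)
  have ev: "eventually (\<lambda>u. f u \<noteq> 0) (at 0)"
    using fps_expansion_upto_tendsto[OF Suc.prems(1)] Suc.prems(2) by (rule tendsto_imp_eventually_ne)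
  have "fps_expansion_upto N (- fps_shift 1 F * inverse F * fps_const (inverse (F$0)))
      (\<lambda>u. - ((f u - F$0) / u) * inverse (f u) * inverse (F$0))"
    by (intro fps_expansion_upto_mult fps_expansion_upto_uminus f' Suc.IH f Suc.prems(2)
        fps_expansion_upto_const)
  then have "fps_expansion_upto N (fps_shift 1 (inverse F)) (\<lambda>u. (inverse (f u) - inverse F $ 0) / u)"
  proof (rule fps_expansion_upto_cong)
    show "eventually (\<lambda>u. - ((f u - F$0) / u) * inverse (f u) * inverse (F$0) =
       (inverse (f u) - inverse F $ 0) / u) (at 0)"
      using ev unfolding eventually_at_filter
      by eventually_elim (use Suc.prems(2) in \<open>auto simp: field_simps\<close>)
  qed (simp only: fps_shift_1_inverse[OF Suc.prems(2)])
  then show ?case by (simp add: fps_expansion_upto_Suc)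
qed

text \<open>Composition needs no expansion of \<open>\<phi>\<close> beyond order \<open>N\<close>: the remainder
  \<open>\<phi> v - \<Sum>k\<le>N. F$k v^k = v^N \<epsilon>(v)\<close> with \<open>\<epsilon>(v) \<rightarrow> 0\<close> is carried through \<open>g(u) = O(u)\<close>.\<close>

lemma fps_expansion_upto_compose:
  assumes F: "fps_expansion_upto N F \<phi>" and F0: "\<phi> 0 = F$0"
    and G: "fps_expansion_upto N G g" and G0: "G$0 = 0"
  shows "fps_expansion_upto N (\<Sum>k\<le>N. fps_const (F$k) * G^k) (\<lambda>u. \<phi> (g u))"
proof -
  define S where "S v = (\<Sum>k\<le>N. F$k * v^k)" for v :: real
  define \<epsilon> where "\<epsilon> v = (if v = 0 then 0 else (\<phi> v - S v) / v^N)" for v :: real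
  have "(\<epsilon> \<longlongrightarrow> 0) (at 0)"
    using F unfolding fps_expansion_upto_def
    by (rule tendsto_cong[THEN iffD1, rotated]) (auto simp: eventually_at_filter \<epsilon>_def S_def)
  then have "isCont \<epsilon> 0" by (simp add: isCont_def \<epsilon>_def)
  moreover have "(g \<longlongrightarrow> 0) (at 0)"
    using fps_expansion_upto_tendsto[OF G] G0 by simp
  ultimately have \<epsilon>_g: "((\<lambda>u. \<epsilon> (g u)) \<longlongrightarrow> 0) (at 0)"
    using isCont_tendsto_compose by (fastforce simp: \<epsilon>_def)
  have "S 0 = F$0" unfolding S_def by (subst sum.atMost_shift) auto
  then have \<phi>_eq: "\<phi> v = S v + v^N * \<epsilon> v" for v
    by (cases "v = 0") (auto simp: \<epsilon>_def F0)
  have main: "fps_expansion_upto N (\<Sum>k\<le>N. fps_const (F$k) * G^k) (\<lambda>u. \<Sum>k\<le>N. F$k * g u ^ k)"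
    by (intro fps_expansion_upto_sum fps_expansion_upto_cmult fps_expansion_upto_power G) auto
  have rem: "fps_expansion_upto N 0 (\<lambda>u. g u ^ N * \<epsilon> (g u))"
  proof (cases N)
    case 0
    then show ?thesis using \<epsilon>_g by (simp add: fps_expansion_upto_0)
  next
    case (Suc M)
    have "fps_expansion_upto 1 G g"
      using G Suc by (intro fps_expansion_upto_mono[OF G]) auto
    then have "((\<lambda>u. g u / u) \<longlongrightarrow> G$1) (at 0)"
      by (simp add: fps_expansion_upto_Suc fps_expansion_upto_0 G0)
    then have "((\<lambda>u. (g u / u)^N * \<epsilon> (g u)) \<longlongrightarrow> (G$1)^N * 0) (at 0)"
      by (intro tendsto_intros \<epsilon>_g)
    then have "((\<lambda>u. (g u / u)^N * \<epsilon> (g u)) \<longlongrightarrow> 0) (at 0)" by simp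
    then show ?thesis unfolding fps_expansion_upto_def
      by (rule tendsto_cong[THEN iffD1, rotated]) (auto simp: eventually_at_filter power_divide)
  qed
  from fps_expansion_upto_add[OF main rem] show ?thesis
    by (rule fps_expansion_upto_cong) (auto simp: \<phi>_eq S_def)
qed

lemma fps_expansion_upto_reflect:
  assumes "fps_expansion_upto N F f"
  shows "fps_expansion_upto N (Abs_fps (\<lambda>k. (-1)^k * F$k)) (\<lambda>u. f (- u))"
proof -
  let ?E = "\<lambda>u. (f u - (\<Sum>k\<le>N. F$k * u^k)) / u^N"
  have "(?E \<longlongrightarrow> 0) (at 0)"
    using assms by (simp add: fps_expansion_upto_def)
  moreover have "filterlim (\<lambda>u::real. - u) (at 0) (at 0)"
    using filtermap_at_minus[of "0::real"] by (simp add: filterlim_def)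
  ultimately have "((\<lambda>u. ?E (- u)) \<longlongrightarrow> 0) (at 0)"
    by (rule filterlim_compose)
  then have "((\<lambda>u. (-1)^N * ?E (- u)) \<longlongrightarrow> 0) (at 0)"
    using tendsto_mult_left[of "\<lambda>u. ?E (- u)" 0 "at 0" "(-1)^N"] by simp
  moreover have "(-1)^N * ?E (- u) =
      (f (- u) - (\<Sum>k\<le>N. Abs_fps (\<lambda>k. (-1)^k * F$k) $ k * u^k)) / u^N" for u
  proof -
    have "(\<Sum>k\<le>N. F$k * (- u)^k) = (\<Sum>k\<le>N. Abs_fps (\<lambda>k. (-1)^k * F$k) $ k * u^k)"
      by (intro sum.cong) (auto simp: power_minus[of u])
    moreover have "(-1::real)^N * (-1)^N = 1" by (simp flip: power_mult_distrib)
    ultimately show ?thesis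
      by (cases "u = 0"; cases N) (auto simp: power_minus[of u] field_simps)
  qed
  ultimately show ?thesis unfolding fps_expansion_upto_def by simp
qed

lemma fps_X_mult_deriv_nth: "(fps_X * fps_deriv (A :: real fps)) $ n = of_nat n * A $ n"
  by (cases n) auto

lemma fps_deriv_power_mult_self:
  "B * fps_deriv (B ^ a) = fps_const (of_nat a) * fps_deriv B * (B :: real fps) ^ a"
proof (cases a)
  case (Suc m)
  then have "B * fps_deriv (B ^ a) = fps_const (of_nat a) * fps_deriv B * (B * B ^ m)"
    by (simp only: fps_deriv_power diff_Suc_1 mult_ac)
  then show ?thesis by (simp add: Suc)
qed simp

lemma fps_deriv_inverse_power_mult_self:
  assumes "B $ 0 \<noteq> (0::real)"
  shows "B * fps_deriv (inverse B ^ c) = - fps_const (of_nat c) * fps_deriv B * inverse B ^ c"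
proof (cases c)
  case (Suc m)
  have "B * fps_deriv (inverse B ^ c) = fps_const (of_nat c) * (B * fps_deriv (inverse B)) * inverse B ^ m"
    by (simp only: fps_deriv_power Suc diff_Suc_1 mult_ac)
  also have "B * fps_deriv (inverse B) = - fps_deriv B * inverse B"
    using assms by (simp add: fps_inverse_deriv power2_eq_square algebra_simps inverse_mult_eq_1')
  finally show ?thesis
    using Suc by (simp only: power_Suc mult_ac mult_minus_left mult_minus_right)
qed simp

text \<open>\<open>A = B\<^sup>r\<close> is characterised by \<open>B A' = r B' A\<close>; comparing coefficients of \<open>z\<^sup>n\<close> in
  \<open>B \<cdot> zA' = r \<cdot> zB' \<cdot> A\<close> is exactly the recursion defining \<open>P\<close>.\<close>

lemma P_eq_fps_nth:
  assumes b0: "b 0 > 0"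
  shows "P n (real a - real c) b = (Abs_fps b ^ a * inverse (Abs_fps b) ^ c) $ n"
proof (induction n rule: less_induct)
  case (less n)
  define B where "B = Abs_fps b"
  define A where "A = B ^ a * inverse B ^ c"
  define r where "r = real a - real c"
  have B0: "B $ 0 \<noteq> 0" using b0 by (simp add: B_def)
  show ?case
  proof (cases "n = 0")
    case True
    then show ?thesis using b0
      by (simp add: P.simps powr_diff powr_realpow fps_nth_power_0 power_inverse divide_inverse)
  next
    case False
    have IH: "P (n - k) r b = A $ (n - k)" if "k \<in> {1..n}" for k
      using less[of "n - k"] that False by (auto simp: A_def B_def r_def)
    have "B * fps_deriv A =
        (B * fps_deriv (B ^ a)) * inverse B ^ c + B ^ a * (B * fps_deriv (inverse B ^ c))"
      by (simp add: A_def algebra_simps)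
    also have "\<dots> = fps_const r * fps_deriv B * A"
      unfolding fps_deriv_power_mult_self fps_deriv_inverse_power_mult_self[OF B0]
      by (simp add: A_def r_def algebra_simps flip: fps_const_sub fps_const_neg)
    finally have "B * (fps_X * fps_deriv A) = fps_const r * ((fps_X * fps_deriv B) * A)"
      by (metis mult.assoc mult.left_commute)
    then have "(B * (fps_X * fps_deriv A)) $ n = (fps_const r * ((fps_X * fps_deriv B) * A)) $ n"
      by (rule arg_cong)
    then have "(\<Sum>i=0..n. b i * (of_nat (n - i) * A $ (n - i))) =
        r * (\<Sum>i=0..n. of_nat i * b i * A $ (n - i))"
      unfolding fps_mult_nth[of B] fps_mult_left_const_nth fps_X_mult_deriv_nth
        fps_mult_nth[of "fps_X * fps_deriv B"]
      by (simp add: B_def)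
    then have "b 0 * (of_nat n * A $ n) =
        r * (\<Sum>i=1..n. of_nat i * b i * A $ (n - i)) - (\<Sum>i=1..n. b i * (of_nat (n - i) * A $ (n - i)))"
      by (simp add: sum.atLeast_Suc_atMost)
    also have "\<dots> = (\<Sum>k=1..n. (real k * (1 + r) - real n) * b k * A $ (n - k))"
      by (simp add: sum_distrib_left flip: sum_subtractf)
        (rule sum.cong, auto simp: of_nat_diff algebra_simps)
    also have "\<dots> = (\<Sum>k=1..n. (real k * (1 + r) - real n) * b k * P (n - k) r b)"
      by (rule sum.cong[OF refl]) (simp only: IH)
    finally have "P n r b = (1 / (real n * b 0)) * (b 0 * (of_nat n * A $ n))"
      using False by (subst P.simps) simp
    then show ?thesis
      using False b0 by (simp add: A_def B_def r_def)
  qed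
qed

lemma P_product_eq_fps_nth:
  assumes "b 0 > 0" "c 0 > 0"
  shows "(\<Sum>k\<le>l. P k (2 * real n) b * P (l - k) (1 - 2 * real n) c) =
    (Abs_fps b ^ (2*n) * (Abs_fps c * inverse (Abs_fps c) ^ (2*n))) $ l"
  using P_eq_fps_nth[of b _ "2*n" 0] P_eq_fps_nth[of c _ 1 "2*n"] assms
  by (simp add: fps_mult_nth atLeast0AtMost)

definition even_fps :: "(nat \<Rightarrow> real) \<Rightarrow> real fps" where
  "even_fps a = Abs_fps a oo fps_X^2"

lemma fps_compose_X_power_2_nth:
  "(F oo fps_X^2) $ j = (if even j then F $ (j div 2) else (0::real))"
proof -
  have "(F oo fps_X^2) $ j = (\<Sum>i=0..j. if i = j div 2 \<and> even j then F $ i else 0)"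
    unfolding fps_compose_nth by (intro sum.cong refl) (auto simp flip: power_mult)
  then show ?thesis by (cases "even j") auto
qed

lemma even_fps_nth: "even_fps a $ j = (if even j then a (j div 2) else 0)"
  by (simp add: even_fps_def fps_compose_X_power_2_nth)

lemma fps_X_mult_even_fps_nth: "(fps_X * even_fps d) $ j = (if odd j then d (j div 2) else 0)"
  by (cases j) (auto simp: even_fps_nth)

lemma sum_even_atMost:
  fixes f :: "nat \<Rightarrow> 'a::comm_monoid_add"
  shows "(\<Sum>k\<le>N. if even k then f (k div 2) else 0) = (\<Sum>n\<le>N div 2. f n)"
proof (induction N)
  case (Suc N)
  then show ?case
    by (cases "even (Suc N)") (auto simp: add.commute elim!: evenE oddE)
qed simp

lemma sum_even_fps_nth_power:
  "(\<Sum>k\<le>N. fps_const (even_fps a $ k) * V^k) = (\<Sum>n\<le>N div 2. fps_const (a n) * V^(2*n))"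
proof -
  have "(\<Sum>k\<le>N. fps_const (even_fps a $ k) * V^k) =
      (\<Sum>k\<le>N. if even k then fps_const (a (k div 2)) * V^(2 * (k div 2)) else 0)"
    by (intro sum.cong refl) (auto simp: even_fps_nth)
  then show ?thesis using sum_even_atMost[of "\<lambda>n. fps_const (a n) * V^(2*n)" N] by simp
qed

lemma sum_even_fps_nth_mult_power:
  "(\<Sum>k\<le>2*K. even_fps a $ k * u^k) = (\<Sum>n\<le>K. a n * u^(2*n))"
proof -
  have "(\<Sum>k\<le>2*K. even_fps a $ k * u^k) =
      (\<Sum>k\<le>2*K. if even k then a (k div 2) * u^(2 * (k div 2)) else 0)"
    by (intro sum.cong refl) (auto simp: even_fps_nth)
  then show ?thesis using sum_even_atMost[of "\<lambda>n. a n * u^(2*n)" "2*K"] by simp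
qed

text \<open>The series produced by \<open>fps_expansion_upto_mean\<close> when \<open>D = XG\<close>; only even
  powers of \<open>DC\<^sup>-\<^sup>1\<close> occur.\<close>

lemma mean_series_nth:
  assumes "j \<le> L"
  shows "(C * (\<Sum>k\<le>L. fps_const (even_fps a $ k) * (fps_X * G * inverse C)^k)) $ j =
    (\<Sum>n\<le>j div 2. a n * (G^(2*n) * (C * inverse C^(2*n))) $ (j - 2*n))"
proof -
  have "C * (fps_const (a n) * (fps_X * G * inverse C)^(2*n)) =
      fps_const (a n) * (fps_X^(2*n) * (G^(2*n) * (C * inverse C^(2*n))))" for n
    by (simp add: power_mult_distrib mult_ac)
  then have "C * (\<Sum>k\<le>L. fps_const (even_fps a $ k) * (fps_X * G * inverse C)^k) =
      (\<Sum>n\<le>L div 2. fps_const (a n) * (fps_X^(2*n) * (G^(2*n) * (C * inverse C^(2*n)))))"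
    by (simp only: sum_even_fps_nth_power sum_distrib_left)
  then have "(C * (\<Sum>k\<le>L. fps_const (even_fps a $ k) * (fps_X * G * inverse C)^k)) $ j =
      (\<Sum>n\<le>L div 2. if n \<le> j div 2 then a n * (G^(2*n) * (C * inverse C^(2*n))) $ (j - 2*n) else 0)"
    by (simp add: fps_sum_nth fps_X_power_mult_nth) (intro sum.cong refl, auto)
  also have "\<dots> = (\<Sum>n\<in>{..L div 2} \<inter> {..j div 2}. a n * (G^(2*n) * (C * inverse C^(2*n))) $ (j - 2*n))"
    by (simp add: sum.inter_restrict atMost_def)
  also have "{..L div 2} \<inter> {..j div 2} = {..j div 2}"
    using assms by (auto intro: div_le_mono order_trans)
  finally show ?thesis .
qed

lemma inner_mean_series_nth:
  fixes aM aN :: "nat \<Rightarrow> real"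
  assumes "j \<le> L"
  defines "g \<equiv> Abs_fps (gseq aM)" and "h \<equiv> Abs_fps (hseq aM)"
  shows "(fps_const (1/2) * h * (\<Sum>k\<le>L. fps_const (even_fps aN $ k) *
      (fps_X * (fps_const (1/2) * g) * inverse (fps_const (1/2) * h))^k)) $ j =
    (even_fps (sseq aM aN) - fps_X * even_fps (dseq aM aN)) $ j"
proof -
  have "fps_const (2::real) ^ (n*2) * fps_const (1/2) ^ (n*2) = 1" for n
    by (simp flip: power_mult_distrib fps_const_mult)
  then have scale: "(fps_const (1/2) * g)^(2*n) * (fps_const (1/2) * h * inverse (fps_const (1/2) * h)^(2*n)) =
      fps_const (1/2) * (g^(2*n) * (h * inverse h^(2*n)))" for n
    by (simp add: fps_inverse_mult fps_const_inverse power_mult_distrib mult_ac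
        flip: fps_const_power fps_const_mult)
  have "gseq aM 0 > 0" "hseq aM 0 > 0" by (simp_all add: gseq_def hseq_def)
  note P_fps = P_product_eq_fps_nth[of "gseq aM" "hseq aM", OF this, symmetric]
  have "(fps_const (1/2) * h * (\<Sum>k\<le>L. fps_const (even_fps aN $ k) *
      (fps_X * (fps_const (1/2) * g) * inverse (fps_const (1/2) * h))^k)) $ j =
    (\<Sum>n\<le>j div 2. aN n * (1/2 * (\<Sum>k\<le>j - 2*n. P k (2 * real n) (gseq aM) *
       P (j - 2*n - k) (1 - 2 * real n) (hseq aM))))"
    unfolding mean_series_nth[OF assms(1)] scale fps_mult_left_const_nth
    unfolding g_def h_def P_fps ..
  also have "\<dots> = (if even j then sseq aM aN (j div 2) else - dseq aM aN (j div 2))"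
  proof (cases "even j")
    case True
    then obtain m where "j = 2*m" by blast
    then show ?thesis by (simp add: sseq_def sum_distrib_left mult_ac)
  next
    case False
    then obtain m where "j = 2*m+1" by (blast elim: oddE)
    then show ?thesis by (simp add: dseq_def sum_distrib_left mult_ac sum_negf)
  qed
  also have "\<dots> = (even_fps (sseq aM aN) - fps_X * even_fps (dseq aM aN)) $ j"
    by (simp add: even_fps_nth fps_X_mult_even_fps_nth del: fps_X_mult_nth)
  finally show ?thesis .
qed

lemma resultant_series_nth:
  assumes "d 0 > 0" "s 0 > 0" "j \<le> L"
  shows "(even_fps s * (\<Sum>k\<le>L. fps_const (even_fps aK $ k) *
      (fps_X * even_fps d * inverse (even_fps s))^k)) $ j =
    even_fps (\<lambda>m. \<Sum>n\<le>m. aK n * (\<Sum>k\<le>m - n. P k (2 * real n) d *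
      P (m - n - k) (1 - 2 * real n) s)) $ j"
proof -
  define S where "S = Abs_fps s"
  define D where "D = Abs_fps d"
  have "S $ 0 \<noteq> 0" using assms by (simp add: S_def)
  then have "even_fps d ^ (2*n) * (even_fps s * inverse (even_fps s) ^ (2*n)) =
      (D ^ (2*n) * (S * inverse S ^ (2*n))) oo fps_X^2" for n
    by (simp add: even_fps_def S_def D_def fps_compose_mult_distrib fps_inverse_compose
        flip: fps_compose_power)
  then have "(even_fps s * (\<Sum>k\<le>L. fps_const (even_fps aK $ k) *
      (fps_X * even_fps d * inverse (even_fps s))^k)) $ j =
    (\<Sum>n\<le>j div 2. aK n * ((D ^ (2*n) * (S * inverse S ^ (2*n))) oo fps_X^2) $ (j - 2*n))"
    by (simp add: mean_series_nth[OF assms(3)])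
  also have "\<dots> = (if even j then (\<Sum>n\<le>j div 2. aK n * (\<Sum>k\<le>j div 2 - n. P k (2 * real n) d *
      P (j div 2 - n - k) (1 - 2 * real n) s)) else 0)"
  proof (cases "even j")
    case True
    then obtain m where j: "j = 2*m" by blast
    have "((D ^ (2*n) * (S * inverse S ^ (2*n))) oo fps_X^2) $ (j - 2*n) =
        (\<Sum>k\<le>m - n. P k (2 * real n) d * P (m - n - k) (1 - 2 * real n) s)" if "n \<le> m" for n
    proof -
      have "j - 2*n = 2*(m-n)" using j by simp
      then show ?thesis
        by (simp add: fps_compose_X_power_2_nth S_def D_def P_product_eq_fps_nth[of d s, OF assms(1,2), symmetric])
    qed
    then show ?thesis using True j by simp
  next
    case False
    then show ?thesis
      by (auto intro!: sum.neutral simp: fps_compose_X_power_2_nth)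
  qed
  also have "\<dots> = even_fps (\<lambda>m. \<Sum>n\<le>m. aK n * (\<Sum>k\<le>m - n. P k (2 * real n) d *
      P (m - n - k) (1 - 2 * real n) s)) $ j"
    by (simp add: even_fps_nth)
  finally show ?thesis .
qed

lemma is_mean_pos: "is_mean M \<Longrightarrow> s > 0 \<Longrightarrow> t > 0 \<Longrightarrow> M s t > 0"
  unfolding is_mean_def by (metis min_less_iff_conj order_less_le_trans)

lemma is_mean_diag: "is_mean M \<Longrightarrow> x > 0 \<Longrightarrow> M x x = x"
  unfolding is_mean_def by (metis min.idem max.idem order_antisym)

lemma homogeneous_mean_center:
  assumes "homogeneous_mean N" "s > 0" "t > 0"
  shows "N s t = (s + t) / 2 * N (1 - (t - s) / (s + t)) (1 + (t - s) / (s + t))"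
proof -
  have "s = (s + t) / 2 * (1 - (t - s) / (s + t))" "t = (s + t) / 2 * (1 + (t - s) / (s + t))"
    and "1 - (t - s) / (s + t) > 0" "1 + (t - s) / (s + t) > 0"
    using assms(2,3) by (auto simp: field_simps)
  then show ?thesis
    using assms unfolding homogeneous_mean_def by (metis half_gt_zero add_pos_pos)
qed

lemma homogeneous_mean_shift:
  assumes "homogeneous_mean N" "x > \<bar>t\<bar>"
  shows "N (x - t) (x + t) = x * N (1 - t / x) (1 + t / x)"
proof -
  have "x - t = x * (1 - t / x)" "x + t = x * (1 + t / x)"
    and "1 - t / x > 0" "1 + t / x > 0" "x > 0"
    using assms(2) by (auto simp: field_simps abs_less_iff)
  then show ?thesis using assms(1) unfolding homogeneous_mean_def by metis
qed

lemma power_mult_powr_odd: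
  "x > 0 \<Longrightarrow> t ^ (2*n) * x powr (1 - 2 * real n) = x * (t / x) ^ (2*n)"
  by (simp add: powr_diff power_divide flip: powr_realpow)

lemma sym_asymp_exp_coeff_0:
  assumes "is_mean M" "has_sym_asymp_exp M a"
  shows "a 0 = 1"
proof -
  have "(\<lambda>x. M (x - 0) (x + 0) - (\<Sum>n\<le>0. a n * 0 ^ (2 * n) * x powr (1 - 2 * real n)))
          \<in> o[at_top](\<lambda>x. x powr (1 - 2 * real 0))"
    using assms(2) unfolding has_sym_asymp_exp_def by blast
  then have "((\<lambda>x. (M x x - a 0 * x powr 1) / x powr 1) \<longlongrightarrow> 0) at_top"
    by (intro smalloD_tendsto) simp
  moreover have "eventually (\<lambda>x. (M x x - a 0 * x powr 1) / x powr 1 = 1 - a 0) at_top"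
    using eventually_gt_at_top[of 0]
    by eventually_elim (simp add: is_mean_diag[OF assms(1)] field_simps)
  ultimately have "((\<lambda>x::real. 1 - a 0) \<longlongrightarrow> 0) at_top" by (simp add: tendsto_cong)
  then show ?thesis by (simp add: tendsto_const_iff)
qed

lemma sym_asymp_remainder_eq:
  assumes "homogeneous_mean R" "x > \<bar>t\<bar>" "t \<noteq> 0"
  shows "(R (x - t) (x + t) - (\<Sum>n\<le>K. a n * t ^ (2 * n) * x powr (1 - 2 * real n))) /
      x powr (1 - 2 * real K) =
    t ^ (2*K) * ((R (1 - t / x) (1 + t / x) - (\<Sum>n\<le>K. a n * (t / x) ^ (2*n))) / (t / x) ^ (2*K))"
proof -
  have "x > 0" using assms(2) by linarith
  have "(\<Sum>n\<le>K. a n * t ^ (2 * n) * x powr (1 - 2 * real n)) = x * (\<Sum>n\<le>K. a n * (t / x) ^ (2*n))"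
    using \<open>x > 0\<close> by (simp add: power_mult_powr_odd sum_distrib_left mult.assoc mult.left_commute)
  moreover have "x powr (1 - 2 * real K) = x * (1 / x) ^ (2*K)"
    using power_mult_powr_odd[OF \<open>x > 0\<close>, of 1 K] by simp
  moreover have "(t / x) ^ (2*K) = t ^ (2*K) * (1 / x) ^ (2*K)"
    by (simp add: power_divide)
  ultimately show ?thesis
    using \<open>x > 0\<close> assms(3)
    by (simp add: homogeneous_mean_shift[OF assms(1,2)] right_diff_distrib[symmetric])
qed

lemma sym_asymp_exp_imp_fps_expansion:
  assumes sym: "symmetric_mean M" and hom: "homogeneous_mean M" and exp: "has_sym_asymp_exp M a"
  shows "fps_expansion_upto L (even_fps a) (\<lambda>u. M (1 - u) (1 + u))"
proof -
  define E where "E u = (M (1 - u) (1 + u) - (\<Sum>n\<le>L. a n * u^(2*n))) / u^(2*L)" for u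
  have "(\<lambda>x. M (x - 1) (x + 1) - (\<Sum>n\<le>L. a n * 1 ^ (2 * n) * x powr (1 - 2 * real n)))
          \<in> o[at_top](\<lambda>x. x powr (1 - 2 * real L))"
    using exp unfolding has_sym_asymp_exp_def by blast
  then have "((\<lambda>x. (M (x - 1) (x + 1) - (\<Sum>n\<le>L. a n * 1 ^ (2 * n) * x powr (1 - 2 * real n))) /
      x powr (1 - 2 * real L)) \<longlongrightarrow> 0) at_top"
    by (intro smalloD_tendsto) simp
  moreover have "eventually (\<lambda>x. (M (x - 1) (x + 1) - (\<Sum>n\<le>L. a n * 1 ^ (2 * n) * x powr (1 - 2 * real n))) /
      x powr (1 - 2 * real L) = E (inverse x)) at_top"
    using eventually_gt_at_top[of 1]
    by eventually_elim (simp only: sym_asymp_remainder_eq[OF hom] E_def, auto simp: inverse_eq_divide)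
  ultimately have "((\<lambda>x. E (inverse x)) \<longlongrightarrow> 0) at_top" by (simp add: tendsto_cong)
  then have right: "(E \<longlongrightarrow> 0) (at_right 0)"
    unfolding filterlim_at_top_to_right by simp
  have "eventually (\<lambda>u::real. u \<in> {0<..<1}) (at_right 0)"
    by (rule eventually_at_right_real) simp
  then have "eventually (\<lambda>u. E u = E (- u)) (at_right 0)"
    by eventually_elim (use sym in \<open>auto simp: E_def symmetric_mean_def\<close>)
  with right have "((\<lambda>u. E (- u)) \<longlongrightarrow> 0) (at_right 0)" by (simp add: tendsto_cong)
  then have "(E \<longlongrightarrow> 0) (at_left 0)"
    unfolding filterlim_at_left_to_right by simp
  with right have "(E \<longlongrightarrow> 0) (at 0)" by (rule filterlim_split_at[rotated])
  then have "fps_expansion_upto (2*L) (even_fps a) (\<lambda>u. M (1 - u) (1 + u))"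
    unfolding fps_expansion_upto_def E_def sum_even_fps_nth_mult_power by (simp add: power_mult)
  then show ?thesis by (rule fps_expansion_upto_mono) simp
qed

lemma fps_expansion_imp_sym_asymp_exp:
  assumes "is_mean R" and hom: "homogeneous_mean R" and "a 0 = 1"
    and exp: "\<And>L. fps_expansion_upto L (even_fps a) (\<lambda>u. R (1 - u) (1 + u))"
  shows "has_sym_asymp_exp R a"
  unfolding has_sym_asymp_exp_def
proof (intro allI)
  fix t :: real and K :: nat
  let ?f = "\<lambda>x. R (x - t) (x + t) - (\<Sum>n\<le>K. a n * t ^ (2 * n) * x powr (1 - 2 * real n))"
  let ?g = "\<lambda>x::real. x powr (1 - 2 * real K)"
  have "((\<lambda>x. ?f x / ?g x) \<longlongrightarrow> 0) at_top"
  proof (cases "t = 0")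
    case True
    have "eventually (\<lambda>x. ?f x / ?g x = 0) at_top"
      using eventually_gt_at_top[of 0]
      by eventually_elim (subst sum.atMost_shift, use True assms(3) is_mean_diag[OF assms(1)] in auto)
    then show ?thesis by (rule tendsto_eventually)
  next
    case False
    define E where "E u = (R (1 - u) (1 + u) - (\<Sum>n\<le>K. a n * u^(2*n))) / u^(2*K)" for u
    have "(E \<longlongrightarrow> 0) (at 0)"
      using exp[of "2*K"] unfolding fps_expansion_upto_def E_def sum_even_fps_nth_mult_power
      by (simp add: power_mult)
    moreover have "filterlim (\<lambda>x. t / x) (at 0) at_top"
    proof (rule filterlim_atI)
      show "((\<lambda>x. t / x) \<longlongrightarrow> 0) at_top"
        by (rule tendsto_divide_0[OF tendsto_const filterlim_at_top_imp_at_infinity[OF filterlim_ident]])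
      show "eventually (\<lambda>x. t / x \<noteq> 0) at_top"
        using eventually_gt_at_top[of 0] by eventually_elim (use False in simp)
    qed
    ultimately have "((\<lambda>x. E (t / x)) \<longlongrightarrow> 0) at_top"
      by (rule filterlim_compose)
    then have "((\<lambda>x. t ^ (2*K) * E (t / x)) \<longlongrightarrow> t ^ (2*K) * 0) at_top"
      by (rule tendsto_mult_left)
    moreover have "eventually (\<lambda>x. t ^ (2*K) * E (t / x) = ?f x / ?g x) at_top"
      using eventually_gt_at_top[of "\<bar>t\<bar>"]
      by eventually_elim (simp only: sym_asymp_remainder_eq[OF hom _ False] E_def)
    ultimately show ?thesis by (simp add: tendsto_cong)
  qed
  moreover have "eventually (\<lambda>x. ?g x \<noteq> 0) at_top"
    using eventually_gt_at_top[of 0] by eventually_elim simp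
  ultimately show "?f \<in> o[at_top](?g)" by (rule smalloI_tendsto)
qed

lemma fps_expansion_upto_mean:
  assumes "is_mean N" "symmetric_mean N" "homogeneous_mean N" "has_sym_asymp_exp N a"
    and C: "fps_expansion_upto L C (\<lambda>u. (x u + y u) / 2)" and "C $ 0 \<noteq> 0"
    and D: "fps_expansion_upto L D (\<lambda>u. (y u - x u) / 2)" and "D $ 0 = 0"
    and pos: "eventually (\<lambda>u. x u > 0 \<and> y u > 0) (at 0)"
  shows "fps_expansion_upto L (C * (\<Sum>k\<le>L. fps_const (even_fps a $ k) * (D * inverse C)^k))
      (\<lambda>u. N (x u) (y u))"
proof -
  have "a 0 = 1" using assms(1,4) by (rule sym_asymp_exp_coeff_0)
  then have \<phi>0: "N (1 - 0) (1 + 0) = even_fps a $ 0"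
    using is_mean_diag[OF assms(1), of 1] by (simp add: even_fps_nth)
  have v: "fps_expansion_upto L (D * inverse C) (\<lambda>u. (y u - x u) / 2 * inverse ((x u + y u) / 2))"
    by (rule fps_expansion_upto_mult[OF D fps_expansion_upto_inverse[OF C]]) fact
  have "fps_expansion_upto L (\<Sum>k\<le>L. fps_const (even_fps a $ k) * (D * inverse C)^k)
      (\<lambda>u. N (1 - (y u - x u) / 2 * inverse ((x u + y u) / 2)) (1 + (y u - x u) / 2 * inverse ((x u + y u) / 2)))"
    by (rule fps_expansion_upto_compose[OF sym_asymp_exp_imp_fps_expansion[OF assms(2-4)] \<phi>0 v])
      (simp add: \<open>D $ 0 = 0\<close>)
  from fps_expansion_upto_mult[OF C this] show ?thesis
  proof (rule fps_expansion_upto_cong)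
    show "eventually (\<lambda>u. (x u + y u) / 2 * N (1 - (y u - x u) / 2 * inverse ((x u + y u) / 2))
        (1 + (y u - x u) / 2 * inverse ((x u + y u) / 2)) = N (x u) (y u)) (at 0)"
      using pos
    proof eventually_elim
      case (elim u)
      have "(y u - x u) / 2 * inverse ((x u + y u) / 2) = (y u - x u) / (x u + y u)"
        by (simp add: field_split_simps)
      moreover have "N (x u) (y u) = (x u + y u) / 2 * N (1 - (y u - x u) / (x u + y u)) (1 + (y u - x u) / (x u + y u))"
        using elim by (intro homogeneous_mean_center[OF assms(3)]) auto
      ultimately show ?case by simp
    qed
  qed (rule refl)
qed

lemma is_mean_between:
  assumes "is_mean N" "a \<le> x" "x \<le> b" "a \<le> y" "y \<le> b" "x > 0" "y > 0"
  shows "a \<le> N x y \<and> N x y \<le> b"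
  using assms unfolding is_mean_def by (smt (verit) min_def max_def)

lemma is_mean_resultant:
  assumes "is_mean M" "is_mean N" "is_mean K"
  shows "is_mean (resultant K N M)"
  unfolding is_mean_def resultant_def
proof (intro allI impI)
  fix s t :: real assume "s > 0" "t > 0"
  then have "min s t \<le> M s t" "M s t \<le> max s t" "M s t > 0"
    using assms(1) is_mean_pos[OF assms(1)] unfolding is_mean_def by auto
  with \<open>s > 0\<close> \<open>t > 0\<close> have "min s t \<le> N s (M s t) \<and> N s (M s t) \<le> max s t"
      "min s t \<le> N (M s t) t \<and> N (M s t) t \<le> max s t"
    by (intro is_mean_between[OF assms(2)]; simp)+
  moreover have "N s (M s t) > 0" "N (M s t) t > 0"
    using is_mean_pos[OF assms(2)] \<open>s > 0\<close> \<open>t > 0\<close> \<open>M s t > 0\<close> by auto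
  ultimately show "min s t \<le> K (N s (M s t)) (N (M s t) t) \<and> K (N s (M s t)) (N (M s t) t) \<le> max s t"
    by (intro is_mean_between[OF assms(3)]) auto
qed

lemma homogeneous_mean_resultant:
  assumes "is_mean M" "is_mean N" "homogeneous_mean M" "homogeneous_mean N" "homogeneous_mean K"
  shows "homogeneous_mean (resultant K N M)"
  unfolding homogeneous_mean_def
proof (intro allI impI)
  fix l s t :: real assume "l > 0" "s > 0" "t > 0"
  then have "M s t > 0" using is_mean_pos[OF assms(1)] by blast
  then have "N s (M s t) > 0" "N (M s t) t > 0"
    using is_mean_pos[OF assms(2)] \<open>s > 0\<close> \<open>t > 0\<close> by auto
  then show "resultant K N M (l * s) (l * t) = l * resultant K N M s t"
    using assms(3-5) \<open>l > 0\<close> \<open>s > 0\<close> \<open>t > 0\<close> \<open>M s t > 0\<close>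
    unfolding resultant_def homogeneous_mean_def by simp
qed

lemma resultant_eq_symmetric_form:
  assumes "is_mean M" "symmetric_mean M" "symmetric_mean N" "s > 0" "t > 0"
  shows "resultant K N M s t = K (N s (M s t)) (N t (M t s))"
proof -
  have "M s t > 0" using is_mean_pos[OF assms(1,4,5)] .
  then show ?thesis
    using assms(2-5) unfolding resultant_def symmetric_mean_def by metis
qed

lemma eventually_abs_less_1_at_0: "eventually (\<lambda>u::real. \<bar>u\<bar> < 1) (at 0)"
  unfolding eventually_at by (intro exI[of _ 1]) (auto simp: dist_real_def)

lemma sseq_0: "aN 0 = 1 \<Longrightarrow> sseq aM aN 0 = 1"
  by (simp add: sseq_def P.simps[of 0] gseq_def hseq_def)

lemma dseq_0: "aN 0 = 1 \<Longrightarrow> dseq aM aN 0 = 1/2"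
  by (simp add: dseq_def P.simps[of 0] P.simps[of "Suc 0"] gseq_def hseq_def)

lemma hseq_fps_eq: "aM 0 = 1 \<Longrightarrow> 1 - fps_X + even_fps aM = Abs_fps (hseq aM)"
  by (rule fps_ext) (auto simp: even_fps_nth hseq_def)

lemma gseq_fps_eq: "aM 0 = 1 \<Longrightarrow> even_fps aM - (1 - fps_X) = fps_X * Abs_fps (gseq aM)"
proof (rule fps_ext)
  fix n assume "aM 0 = 1"
  then show "(even_fps aM - (1 - fps_X)) $ n = (fps_X * Abs_fps (gseq aM)) $ n"
    by (cases "n \<le> 1") (auto simp: even_fps_nth gseq_def elim!: evenE oddE)
qed

lemma inner_mean_fps_expansion:
  assumes "is_mean M" "symmetric_mean M" "homogeneous_mean M" "has_sym_asymp_exp M aM"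
    and N: "is_mean N" "symmetric_mean N" "homogeneous_mean N" "has_sym_asymp_exp N aN"
  shows "fps_expansion_upto L (even_fps (sseq aM aN) - fps_X * even_fps (dseq aM aN))
      (\<lambda>u. N (1 - u) (M (1 - u) (1 + u)))"
proof -
  define m where "m u = M (1 - u) (1 + u)" for u
  have aM0: "aM 0 = 1" using assms(1,4) by (rule sym_asymp_exp_coeff_0)
  have m: "fps_expansion_upto L (even_fps aM) m"
    unfolding m_def using assms(2-4) by (rule sym_asymp_exp_imp_fps_expansion)
  have "fps_expansion_upto L (fps_const (1/2) * (1 - fps_X + even_fps aM)) (\<lambda>u. 1/2 * ((1 - u) + m u))"
    by (intro fps_expansion_upto_cmult fps_expansion_upto_add fps_expansion_upto_diff
        fps_expansion_upto_X m fps_expansion_upto_const[of L 1, simplified])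
  then have C: "fps_expansion_upto L (fps_const (1/2) * Abs_fps (hseq aM)) (\<lambda>u. ((1 - u) + m u) / 2)"
    by (rule fps_expansion_upto_cong) (simp_all add: hseq_fps_eq aM0)
  have "fps_expansion_upto L (fps_const (1/2) * (even_fps aM - (1 - fps_X))) (\<lambda>u. 1/2 * (m u - (1 - u)))"
    by (intro fps_expansion_upto_cmult fps_expansion_upto_diff
        fps_expansion_upto_X m fps_expansion_upto_const[of L 1, simplified])
  then have D: "fps_expansion_upto L (fps_X * (fps_const (1/2) * Abs_fps (gseq aM))) (\<lambda>u. (m u - (1 - u)) / 2)"
    by (rule fps_expansion_upto_cong) (simp_all add: gseq_fps_eq aM0 mult.left_commute)
  have "eventually (\<lambda>u. 1 - u > 0 \<and> m u > 0) (at 0)"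
    using eventually_abs_less_1_at_0
    by eventually_elim (auto simp: m_def intro: is_mean_pos[OF assms(1)])
  moreover have "(fps_const (1/2) * Abs_fps (hseq aM)) $ 0 \<noteq> 0"
    and "(fps_X * (fps_const (1/2) * Abs_fps (gseq aM))) $ 0 = 0"
    by (simp_all add: hseq_def)
  ultimately have "fps_expansion_upto L
      (fps_const (1/2) * Abs_fps (hseq aM) * (\<Sum>k\<le>L. fps_const (even_fps aN $ k) *
        (fps_X * (fps_const (1/2) * Abs_fps (gseq aM)) * inverse (fps_const (1/2) * Abs_fps (hseq aM)))^k))
      (\<lambda>u. N (1 - u) (m u))"
    using fps_expansion_upto_mean[OF N C _ D] by blast
  then show ?thesis
    by (rule fps_expansion_upto_cong) (simp_all add: m_def inner_mean_series_nth)
qed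

lemma resultant_fps_expansion:
  assumes M: "is_mean M" "symmetric_mean M" "homogeneous_mean M" "has_sym_asymp_exp M aM"
      and N: "is_mean N" "symmetric_mean N" "homogeneous_mean N" "has_sym_asymp_exp N aN"
      and K: "is_mean K" "symmetric_mean K" "homogeneous_mean K" "has_sym_asymp_exp K aK"
  shows "fps_expansion_upto L (even_fps (resultant_coeff aK aN aM)) (\<lambda>u. resultant K N M (1 - u) (1 + u))"
proof -
  define s where "s = sseq aM aN"
  define d where "d = dseq aM aN"
  define p where "p u = N (1 - u) (M (1 - u) (1 + u))" for u
  have aN0: "aN 0 = 1" using N(1,4) by (rule sym_asymp_exp_coeff_0)
  have p: "fps_expansion_upto L (even_fps s - fps_X * even_fps d) p"
    unfolding p_def s_def d_def by (rule inner_mean_fps_expansion[OF M N])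
  from fps_expansion_upto_reflect[OF this]
  have p_reflect: "fps_expansion_upto L (even_fps s + fps_X * even_fps d) (\<lambda>u. p (- u))"
    by (rule fps_expansion_upto_cong) (auto simp: even_fps_nth fps_X_mult_even_fps_nth)
  from fps_expansion_upto_cmult[OF fps_expansion_upto_add[OF p p_reflect], of "1/2"]
  have C: "fps_expansion_upto L (even_fps s) (\<lambda>u. (p u + p (- u)) / 2)"
    by (rule fps_expansion_upto_cong) auto
  from fps_expansion_upto_cmult[OF fps_expansion_upto_diff[OF p_reflect p], of "1/2"]
  have D: "fps_expansion_upto L (fps_X * even_fps d) (\<lambda>u. (p (- u) - p u) / 2)"
    by (rule fps_expansion_upto_cong) auto
  have pos: "p u > 0" if "\<bar>u\<bar> < 1" for u
    using that unfolding p_def by (intro is_mean_pos[OF N(1)] is_mean_pos[OF M(1)]) auto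
  have s0: "s 0 = 1" and d0: "d 0 = 1/2"
    using aN0 by (simp_all add: s_def d_def sseq_0 dseq_0)
  have "eventually (\<lambda>u. p u > 0 \<and> p (- u) > 0) (at 0)"
    using eventually_abs_less_1_at_0 by eventually_elim (simp add: pos)
  from fps_expansion_upto_mean[OF K C _ D _ this] s0
  have "fps_expansion_upto L (even_fps s * (\<Sum>k\<le>L. fps_const (even_fps aK $ k) *
      (fps_X * even_fps d * inverse (even_fps s))^k)) (\<lambda>u. K (p u) (p (- u)))"
    by (simp add: even_fps_nth)
  then show ?thesis
  proof (rule fps_expansion_upto_cong)
    show "eventually (\<lambda>u. K (p u) (p (- u)) = resultant K N M (1 - u) (1 + u)) (at 0)"
      using eventually_abs_less_1_at_0
      by eventually_elim (simp add: resultant_eq_symmetric_form[OF M(1,2) N(2)] p_def)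
  next
    have "resultant_coeff aK aN aM = (\<lambda>m. \<Sum>n\<le>m. aK n * (\<Sum>k\<le>m - n. P k (2 * real n) d *
        P (m - n - k) (1 - 2 * real n) s))"
      by (simp add: fun_eq_iff resultant_coeff_def s_def d_def)
    then show "(even_fps s * (\<Sum>k\<le>L. fps_const (even_fps aK $ k) *
        (fps_X * even_fps d * inverse (even_fps s))^k)) $ j = even_fps (resultant_coeff aK aN aM) $ j"
      if "j \<le> L" for j
      using s0 d0 by (simp add: resultant_series_nth[OF _ _ that])
  qed
qed

theorem theorem3p1:
  fixes M N K :: "real \<Rightarrow> real \<Rightarrow> real" and aM aN aK :: "nat \<Rightarrow> real"
  assumes "is_mean M" "symmetric_mean M" "homogeneous_mean M" "has_sym_asymp_exp M aM"
      and "is_mean N" "symmetric_mean N" "homogeneous_mean N" "has_sym_asymp_exp N aN"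
      and "is_mean K" "symmetric_mean K" "homogeneous_mean K" "has_sym_asymp_exp K aK"
  shows "has_sym_asymp_exp (resultant K N M) (resultant_coeff aK aN aM)"
proof (rule fps_expansion_imp_sym_asymp_exp)
  show "is_mean (resultant K N M)"
    using assms(1,5,9) by (rule is_mean_resultant)
  show "homogeneous_mean (resultant K N M)"
    using assms(1,5,3,7,11) by (rule homogeneous_mean_resultant)
  have "aN 0 = 1" "aK 0 = 1"
    using assms(5,8) assms(9,12) by (auto intro: sym_asymp_exp_coeff_0)
  then show "resultant_coeff aK aN aM 0 = 1"
    by (simp add: resultant_coeff_def P.simps[of 0] sseq_0 dseq_0)
  show "fps_expansion_upto L (even_fps (resultant_coeff aK aN aM)) (\<lambda>u. resultant K N M (1 - u) (1 + u))" for L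
    using assms by (rule resultant_fps_expansion)
qed

end
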